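(* Let $\tau$ be an infinitesimal bending of an isometric immersion $f\colon M^n\to\mathbb{R}^{n+p}$, $p\ge2$, satisfying condition $( * )$ with unit normal $\eta$ and $\xi\in\Gamma(R)$. Then the bilinear form $\varphi\colon TM\times(f_*TM\oplus P)\to R\oplus R$ defined by $$\varphi(X,\lambda)=\big((\tilde\nabla_X\lambda)_R+((\tilde\nabla_X\bar L)\lambda)_R,\ (\tilde\nabla_X\lambda)_R-((\tilde\nabla_X\bar L)\lambda)_R\big)$$ is flat with respect to the indefinite inner product $\langle\!\langle(\xi_1,\mu_1),(\xi_2,\mu_2)\rangle\!\rangle=\langle\xi_1,\xi_2\rangle-\langle\mu_1,\mu_2\rangle$ on $R\oplus R$, i.e. $\langle\!\langle\varphi(X,\lambda),\varphi(Y,\delta)\rangle\!\rangle-\langle\!\langle\varphi(X,\delta),\varphi(Y,\lambda)\rangle\!\rangle=0$ for all $X,Y$ tangent and $\lambda,\delta\in f_*TM\oplus P$.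
   Context: $\alpha$ is the second fundamental form of $f$, $N_fM$ its normal bundle, $\tilde\nabla$ the Euclidean connection. An infinitesimal bending is a smooth $\tau\colon M\to\mathbb{R}^{n+p}$ with $\langle f_*X,\tilde\nabla_X\tau\rangle=0$ for all tangent $X$. Set $LX=\tilde\nabla_X\tau$, $B(X,Y)=\tilde\nabla_X(LY)-L\nabla_XY$, and $\beta$ the normal component of $B$. Condition $( * )$: there are a unit $\eta\in\Gamma(N_fM)$ and $\xi\in\Gamma(R)$, where $N_fM=P\oplus R$ orthogonally with $P=\mathrm{span}\{\eta\}$, such that $\langle\beta(X,Y),\eta\rangle+\langle\alpha(X,Y),\xi\rangle=0$ for all $X,Y$. The tensor $\bar L$ on $f_*TM\oplus P$ is $\bar L(f_*X)=LX$ and $\bar L\eta=f_*Y+\xi$, where $\langle Y,X\rangle+\langle LX,\eta\rangle=0$ for all $X$. $(\tilde\nabla_X\bar L)\lambda=\tilde\nabla_X\bar L\lambda-\bar L\nabla'_X\lambda$, with $\nabla'$ the connection induced on $f_*TM\oplus P$; $(\cdot)_R$ is orthogonal projection onto $R$. *)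

theory Defs
  imports "HOL-Analysis.Analysis"
begin

text \<open>Local, extrinsic model. M is an open set U of coordinates in R^n, f an immersion
  into R^(n+p); tangent vectors X at x are coordinate vectors, f_* X = Df(x) X.
  Vector fields along f are maps U to R^(n+p); the Euclidean connection is the
  ordinary directional derivative.\<close>

coinductive smooth_on :: "'a::real_normed_vector set \<Rightarrow> ('a \<Rightarrow> 'b::real_normed_vector) \<Rightarrow> bool"
  where "f differentiable_on U \<Longrightarrow> (\<forall>v. smooth_on U (\<lambda>x. frechet_derivative f (at x) v))
         \<Longrightarrow> smooth_on U f"

definition D :: "('a::real_normed_vector \<Rightarrow> 'b::real_normed_vector) \<Rightarrow> 'a \<Rightarrow> 'a \<Rightarrow> 'b" where
  "D V x X = frechet_derivative V (at x) X"

definition proj :: "'a::real_inner set \<Rightarrow> 'a \<Rightarrow> 'a" where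
  "proj S v = (THE q. q \<in> S \<and> (\<forall>w\<in>S. inner (v - q) w = 0))"

definition tan_sp :: "('a::real_normed_vector \<Rightarrow> 'b::real_inner) \<Rightarrow> 'a \<Rightarrow> 'b set" where
  "tan_sp f x = range (D f x)"

definition nor_sp :: "('a::real_normed_vector \<Rightarrow> 'b::real_inner) \<Rightarrow> 'a \<Rightarrow> 'b set" where
  "nor_sp f x = {v. \<forall>w\<in>tan_sp f x. inner v w = 0}"

definition immersion_on :: "'a::real_normed_vector set \<Rightarrow> ('a \<Rightarrow> 'b::real_normed_vector) \<Rightarrow> bool" where
  "immersion_on U f \<longleftrightarrow> smooth_on U f \<and> (\<forall>x\<in>U. inj (D f x))"

definition sff :: "('a::real_normed_vector \<Rightarrow> 'b::real_inner) \<Rightarrow> 'a \<Rightarrow> 'a \<Rightarrow> 'a \<Rightarrow> 'b" where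
  "sff f x X Y = proj (nor_sp f x) (D (\<lambda>z. D f z Y) x X)"

text \<open>Levi-Civita connection of the induced metric, for a tangent field V (given as
  f_*TM-valued map): f_*(nabla_X V) = tangent part of the Euclidean derivative.\<close>
definition lc :: "('a::real_normed_vector \<Rightarrow> 'b::real_inner) \<Rightarrow> ('a \<Rightarrow> 'b) \<Rightarrow> 'a \<Rightarrow> 'a \<Rightarrow> 'b" where
  "lc f V x X = proj (tan_sp f x) (D V x X)"

definition infinitesimal_bending :: "'a::real_normed_vector set \<Rightarrow> ('a \<Rightarrow> 'b::real_inner) \<Rightarrow> ('a \<Rightarrow> 'b) \<Rightarrow> bool" where
  "infinitesimal_bending U f \<tau> \<longleftrightarrow> smooth_on U \<tau> \<and> (\<forall>x\<in>U. \<forall>X. inner (D f x X) (D \<tau> x X) = 0)"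

text \<open>L applied to a tangent vector w = f_* X: L w = tilde-nabla_X tau.\<close>
definition Lop :: "('a::real_normed_vector \<Rightarrow> 'b::real_inner) \<Rightarrow> ('a \<Rightarrow> 'b) \<Rightarrow> 'a \<Rightarrow> 'b \<Rightarrow> 'b" where
  "Lop f \<tau> x w = D \<tau> x (THE X. D f x X = w)"

text \<open>B(X,Y) = tilde-nabla_X (L Y) - L nabla_X Y, computed with the coordinate field
  extending Y (B is tensorial); beta is its normal component.\<close>
definition Bten :: "('a::real_normed_vector \<Rightarrow> 'b::real_inner) \<Rightarrow> ('a \<Rightarrow> 'b) \<Rightarrow> 'a \<Rightarrow> 'a \<Rightarrow> 'a \<Rightarrow> 'b" where
  "Bten f \<tau> x X Y = D (\<lambda>z. Lop f \<tau> z (D f z Y)) x X - Lop f \<tau> x (lc f (\<lambda>z. D f z Y) x X)"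

definition beta :: "('a::real_normed_vector \<Rightarrow> 'b::real_inner) \<Rightarrow> ('a \<Rightarrow> 'b) \<Rightarrow> 'a \<Rightarrow> 'a \<Rightarrow> 'a \<Rightarrow> 'b" where
  "beta f \<tau> x X Y = proj (nor_sp f x) (Bten f \<tau> x X Y)"

text \<open>The subbundle R (orthogonal complement of P = span eta in the normal bundle)
  and the bundle f_*TM + P.\<close>
definition Rsp :: "('a::real_normed_vector \<Rightarrow> 'b::real_inner) \<Rightarrow> ('a \<Rightarrow> 'b) \<Rightarrow> 'a \<Rightarrow> 'b set" where
  "Rsp f \<eta> x = {v \<in> nor_sp f x. inner v (\<eta> x) = 0}"

definition Wsp :: "('a::real_normed_vector \<Rightarrow> 'b::real_inner) \<Rightarrow> ('a \<Rightarrow> 'b) \<Rightarrow> 'a \<Rightarrow> 'b set" where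
  "Wsp f \<eta> x = {w + t *\<^sub>R \<eta> x | w t. w \<in> tan_sp f x}"

definition cond_star :: "'a::real_normed_vector set \<Rightarrow> ('a \<Rightarrow> 'b::real_inner) \<Rightarrow> ('a \<Rightarrow> 'b) \<Rightarrow> ('a \<Rightarrow> 'b) \<Rightarrow> ('a \<Rightarrow> 'b) \<Rightarrow> bool" where
  "cond_star U f \<tau> \<eta> \<xi> \<longleftrightarrow> smooth_on U \<eta> \<and> smooth_on U \<xi> \<and>
     (\<forall>x\<in>U. \<eta> x \<in> nor_sp f x \<and> norm (\<eta> x) = 1 \<and> \<xi> x \<in> Rsp f \<eta> x \<and>
        (\<forall>X Y. inner (beta f \<tau> x X Y) (\<eta> x) + inner (sff f x X Y) (\<xi> x) = 0))"

definition Ytan :: "('a::real_normed_vector \<Rightarrow> 'b::real_inner) \<Rightarrow> ('a \<Rightarrow> 'b) \<Rightarrow> ('a \<Rightarrow> 'b) \<Rightarrow> 'a \<Rightarrow> 'b" where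
  "Ytan f \<tau> \<eta> x = (THE y. y \<in> tan_sp f x \<and> (\<forall>X. inner y (D f x X) + inner (D \<tau> x X) (\<eta> x) = 0))"

text \<open>The tensor bar L on f_*TM + P: bar L (f_* X) = L X, bar L eta = f_* Y + xi.\<close>
definition Lbar :: "('a::real_normed_vector \<Rightarrow> 'b::real_inner) \<Rightarrow> ('a \<Rightarrow> 'b) \<Rightarrow> ('a \<Rightarrow> 'b) \<Rightarrow> ('a \<Rightarrow> 'b) \<Rightarrow> 'a \<Rightarrow> 'b \<Rightarrow> 'b" where
  "Lbar f \<tau> \<eta> \<xi> x u = Lop f \<tau> x (proj (tan_sp f x) u) + inner u (\<eta> x) *\<^sub>R (Ytan f \<tau> \<eta> x + \<xi> x)"

definition covLbar :: "('a::real_normed_vector \<Rightarrow> 'b::real_inner) \<Rightarrow> ('a \<Rightarrow> 'b) \<Rightarrow> ('a \<Rightarrow> 'b) \<Rightarrow> ('a \<Rightarrow> 'b) \<Rightarrow> 'a \<Rightarrow> 'a \<Rightarrow> ('a \<Rightarrow> 'b) \<Rightarrow> 'b" where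
  "covLbar f \<tau> \<eta> \<xi> x X lam = D (\<lambda>z. Lbar f \<tau> \<eta> \<xi> z (lam z)) x X
      - Lbar f \<tau> \<eta> \<xi> x (proj (Wsp f \<eta> x) (D lam x X))"

definition phi :: "('a::real_normed_vector \<Rightarrow> 'b::real_inner) \<Rightarrow> ('a \<Rightarrow> 'b) \<Rightarrow> ('a \<Rightarrow> 'b) \<Rightarrow> ('a \<Rightarrow> 'b) \<Rightarrow> 'a \<Rightarrow> 'a \<Rightarrow> ('a \<Rightarrow> 'b) \<Rightarrow> 'b \<times> 'b" where
  "phi f \<tau> \<eta> \<xi> x X lam =
     (let a = proj (Rsp f \<eta> x) (D lam x X);
          b = proj (Rsp f \<eta> x) (covLbar f \<tau> \<eta> \<xi> x X lam)
      in (a + b, a - b))"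

definition iip :: "'b::real_inner \<times> 'b \<Rightarrow> 'b \<times> 'b \<Rightarrow> real" where
  "iip u v = inner (fst u) (fst v) - inner (snd u) (snd v)"

end

theory Submission
  imports Defs
begin

(* Write a section of f_*TM + P as lam = f_* c + s eta and put zeta = bar L eta = f_* Y + xi.
   Modulo terms that the projection N onto R or the tensor derivative of bar L cancel, the
   derivatives of lam and of bar L lam are e = D^2 f (X, c) + s D_X eta and
   k = D^2 tau (X, c) + s D_X zeta, so phi(X, lam) = (N e + N (k - bar L e), N e - N (k - bar L e)).
   Since bar L is skew on f_*TM + P, and since differentiating the bending condition and
   condition (star) gives <e, bar L w> + <k, w> = 0 for w in f_*TM + P, the indefinite product
   <<phi(X, lam), phi(Y, del)>> equals 2 (<e(X, lam), k(Y, del)> + <k(X, lam), e(Y, del)>).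
   The symmetry of third derivatives of f and tau makes this symmetric in lam and del. *)

section \<open>Symmetry of second derivatives\<close>

lemma norm_steps_le:
  fixes u v :: "'a::real_normed_vector"
  assumes "0 \<le> s" "s \<le> t"
  shows "norm (t *\<^sub>R v + s *\<^sub>R u) + norm (s *\<^sub>R u) \<le> t * (2 * norm u + norm v)"
proof -
  have "norm (t *\<^sub>R v + s *\<^sub>R u) \<le> t * norm v + s * norm u"
    using norm_triangle_ineq[of "t *\<^sub>R v" "s *\<^sub>R u"] assms by simp
  moreover have "s * norm u \<le> t * norm u" using assms by (simp add: mult_right_mono)
  ultimately show ?thesis using assms by (simp add: algebra_simps)
qed

lemma norm_steps_eventually_less:
  fixes u v :: "'a::real_normed_vector"
  assumes "r > 0"
  shows "\<exists>d>0. \<forall>s t. 0 \<le> s \<longrightarrow> s \<le> t \<longrightarrow> t < d \<longrightarrow>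
           norm (t *\<^sub>R v + s *\<^sub>R u) + norm (s *\<^sub>R u) < r"
proof (intro exI[of _ "r / (2 * norm u + norm v + 1)"] conjI allI impI)
  define K where "K = 2 * norm u + norm v + 1"
  have K: "K > 0" unfolding K_def by (simp add: add_nonneg_pos)
  show "r / (2 * norm u + norm v + 1) > 0" using assms K unfolding K_def by simp
  fix s t assume st: "0 \<le> s" "s \<le> t" "t < r / (2 * norm u + norm v + 1)"
  then have "t * K < r" using K unfolding K_def by (simp add: less_divide_eq)
  moreover have "t * (2 * norm u + norm v) \<le> t * K" using st unfolding K_def by (intro mult_left_mono) auto
  ultimately show "norm (t *\<^sub>R v + s *\<^sub>R u) + norm (s *\<^sub>R u) < r"
    using norm_steps_le[OF st(1,2), of v u] by linarith
qed

lemma derivative_increment_bound: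
  fixes \<phi> :: "'a::real_normed_vector \<Rightarrow> 'b::real_normed_vector"
  assumes \<phi>: "(\<phi> has_derivative P) (at x)" and e: "e > 0"
  shows "\<exists>d>0. \<forall>s t. 0 \<le> s \<longrightarrow> s \<le> t \<longrightarrow> t < d \<longrightarrow>
           norm (\<phi> (x + t *\<^sub>R v + s *\<^sub>R u) - \<phi> (x + s *\<^sub>R u) - t *\<^sub>R P v) \<le> e * t"
proof -
  define K where "K = 2 * norm u + norm v + 1"
  have K: "K > 0" unfolding K_def by (simp add: add_nonneg_pos)
  have P: "linear P" using \<phi> has_derivative_linear by blast
  obtain r where r: "r > 0"
    and approx: "\<And>y. norm (y - x) < r \<Longrightarrow> norm (\<phi> y - \<phi> x - P (y - x)) \<le> (e / K) * norm (y - x)"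
    using \<phi>[unfolded has_derivative_at_alt] e K by (metis divide_pos_pos)
  obtain d where d: "d > 0" and small: "\<And>s t. 0 \<le> s \<Longrightarrow> s \<le> t \<Longrightarrow> t < d \<Longrightarrow>
      norm (t *\<^sub>R v + s *\<^sub>R u) + norm (s *\<^sub>R u) < r"
    using norm_steps_eventually_less[OF r] by blast
  show ?thesis
  proof (intro exI[of _ d] conjI allI impI d)
    fix s t assume st: "0 \<le> s" "s \<le> t" "t < d"
    define a b where "a = t *\<^sub>R v + s *\<^sub>R u" and "b = s *\<^sub>R u"
    have ab: "norm a < r" "norm b < r" using small[OF st] unfolding a_def b_def
      by (smt (verit) norm_ge_zero)+
    have "\<phi> (x + t *\<^sub>R v + s *\<^sub>R u) - \<phi> (x + s *\<^sub>R u) - t *\<^sub>R P v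
        = (\<phi> (x + a) - \<phi> x - P a) - (\<phi> (x + b) - \<phi> x - P b)"
      unfolding a_def b_def by (simp add: linear_add[OF P] linear_scale[OF P] add.assoc)
    also have "norm \<dots> \<le> (e / K) * norm a + (e / K) * norm b"
      using approx[of "x + a"] approx[of "x + b"] ab norm_triangle_ineq4 by (smt (verit) add_diff_cancel_left')
    also have "\<dots> = (e / K) * (norm a + norm b)" by (simp add: distrib_left)
    also have "\<dots> \<le> (e / K) * (t * K)"
    proof (rule mult_left_mono)
      have "norm a + norm b \<le> t * (2 * norm u + norm v)"
        unfolding a_def b_def by (rule norm_steps_le[OF st(1,2)])
      moreover have "t * K = t * (2 * norm u + norm v) + t" by (simp add: K_def algebra_simps)
      ultimately show "norm a + norm b \<le> t * K" using st by linarith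
    qed (use e K in simp)
    also have "\<dots> = e * t" using K by simp
    finally show "norm (\<phi> (x + t *\<^sub>R v + s *\<^sub>R u) - \<phi> (x + s *\<^sub>R u) - t *\<^sub>R P v) \<le> e * t" .
  qed
qed

lemma steps_eventually_in_open:
  fixes x :: "'a::real_normed_vector"
  assumes "open U" "x \<in> U"
  shows "\<exists>d>0. \<forall>s t. 0 \<le> s \<longrightarrow> s \<le> t \<longrightarrow> t < d \<longrightarrow>
           x + t *\<^sub>R v + s *\<^sub>R u \<in> U \<and> x + s *\<^sub>R u \<in> U"
proof -
  obtain r where r: "r > 0" "ball x r \<subseteq> U" using assms openE by blast
  obtain d where d: "d > 0" and small: "\<And>s t. 0 \<le> s \<Longrightarrow> s \<le> t \<Longrightarrow> t < d \<Longrightarrow>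
      norm (t *\<^sub>R v + s *\<^sub>R u) + norm (s *\<^sub>R u) < r"
    using norm_steps_eventually_less[OF r(1)] by blast
  have "x + y \<in> U" if "norm y < r" for y
    using that r(2) by (auto simp: dist_norm)
  then show ?thesis
    using small d by (smt (verit) add.assoc norm_ge_zero)
qed

lemma has_derivative_along_line:
  assumes "(g has_derivative g') (at (y + s *\<^sub>R u))"
  shows "((\<lambda>s. g (y + s *\<^sub>R u)) has_derivative (\<lambda>h. h *\<^sub>R g' u)) (at s)"
proof -
  have "((\<lambda>s. y + s *\<^sub>R u) has_derivative (\<lambda>h. h *\<^sub>R u)) (at s)"
    by (auto intro!: derivative_eq_intros)
  from has_derivative_compose[OF this assms] show ?thesis
    using linear_scale[OF has_derivative_linear[OF assms]] by (simp add: o_def)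
qed

lemma increment_bound_real:
  fixes k :: "real \<Rightarrow> 'b::real_inner"
  assumes t: "0 < t"
    and k: "\<And>s. 0 \<le> s \<Longrightarrow> s \<le> t \<Longrightarrow> (k has_derivative (\<lambda>h. h *\<^sub>R w s)) (at s)"
    and B: "\<And>s. 0 < s \<Longrightarrow> s < t \<Longrightarrow> norm (w s) \<le> B"
  shows "norm (k t - k 0) \<le> t * B"
proof -
  have "continuous_on {0..t} k"
  proof (rule continuous_at_imp_continuous_on, intro ballI)
    fix s assume "s \<in> {0..t}"
    then show "isCont k s" using k[of s] has_derivative_continuous by auto
  qed
  then obtain s where s: "s \<in> {0<..<t}" "norm (k t - k 0) \<le> norm ((t - 0) *\<^sub>R w s)"
    using mvt_general[of 0 t k "\<lambda>s h. h *\<^sub>R w s"] t k by force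
  then show ?thesis using t B[of s] by (simp add: mult_left_mono order_trans)
qed

lemma second_difference_estimate:
  fixes g :: "'a::real_normed_vector \<Rightarrow> 'b::real_inner"
  assumes U: "open U" "x \<in> U"
    and g: "\<And>z. z \<in> U \<Longrightarrow> (g has_derivative g' z) (at z)"
    and g'u: "((\<lambda>z. g' z u) has_derivative P) (at x)"
    and e: "e > 0"
  shows "\<exists>d>0. \<forall>t. 0 < t \<longrightarrow> t < d \<longrightarrow>
     norm (g (x + t *\<^sub>R v + t *\<^sub>R u) - g (x + t *\<^sub>R u) - g (x + t *\<^sub>R v) + g x - (t * t) *\<^sub>R P v)
       \<le> e * (t * t)"
proof -
  obtain d1 where d1: "d1 > 0" and slope: "\<And>s t. 0 \<le> s \<Longrightarrow> s \<le> t \<Longrightarrow> t < d1 \<Longrightarrow>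
      norm (g' (x + t *\<^sub>R v + s *\<^sub>R u) u - g' (x + s *\<^sub>R u) u - t *\<^sub>R P v) \<le> e * t"
    using derivative_increment_bound[OF g'u e, of v u] by blast
  obtain d2 where d2: "d2 > 0" and inU: "\<And>s t. 0 \<le> s \<Longrightarrow> s \<le> t \<Longrightarrow> t < d2 \<Longrightarrow>
      x + t *\<^sub>R v + s *\<^sub>R u \<in> U \<and> x + s *\<^sub>R u \<in> U"
    using steps_eventually_in_open[OF U] by blast
  show ?thesis
  proof (intro exI[of _ "min d1 d2"] conjI allI impI)
    show "min d1 d2 > 0" using d1 d2 by simp
    fix t assume t: "0 < t" "t < min d1 d2"
    define k where "k s = g (x + t *\<^sub>R v + s *\<^sub>R u) - g (x + s *\<^sub>R u) - (s * t) *\<^sub>R P v" for s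
    define w where "w s = g' (x + t *\<^sub>R v + s *\<^sub>R u) u - g' (x + s *\<^sub>R u) u - t *\<^sub>R P v" for s
    have "(k has_derivative (\<lambda>h. h *\<^sub>R w s)) (at s)" if "0 \<le> s" "s \<le> t" for s
    proof -
      have "(k has_derivative (\<lambda>h. h *\<^sub>R g' (x + t *\<^sub>R v + s *\<^sub>R u) u - h *\<^sub>R g' (x + s *\<^sub>R u) u
          - (h * t) *\<^sub>R P v)) (at s)"
        unfolding k_def using inU[OF that] t
        by (intro has_derivative_diff has_derivative_along_line g) (auto intro!: derivative_eq_intros)
      then show ?thesis by (simp add: w_def algebra_simps)
    qed
    then have "norm (k t - k 0) \<le> t * (e * t)"
      using increment_bound_real[OF t(1), of k w] slope[of _ t] t unfolding w_def by simp
    then show "norm (g (x + t *\<^sub>R v + t *\<^sub>R u) - g (x + t *\<^sub>R u) - g (x + t *\<^sub>R v) + g x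
        - (t * t) *\<^sub>R P v) \<le> e * (t * t)"
      by (simp add: k_def algebra_simps)
  qed
qed

lemma second_derivative_symmetric:
  fixes g :: "'a::real_normed_vector \<Rightarrow> 'b::real_inner"
  assumes U: "open U" "x \<in> U"
    and g: "\<And>z. z \<in> U \<Longrightarrow> (g has_derivative g' z) (at z)"
    and g'u: "((\<lambda>z. g' z u) has_derivative Pu) (at x)"
    and g'v: "((\<lambda>z. g' z v) has_derivative Pv) (at x)"
  shows "Pu v = Pv u"
proof (rule ccontr)
  assume ne: "Pu v \<noteq> Pv u"
  define e where "e = norm (Pu v - Pv u) / 4"
  have e: "e > 0" using ne unfolding e_def by simp
  define H where "H t = g (x + t *\<^sub>R v + t *\<^sub>R u) - g (x + t *\<^sub>R u) - g (x + t *\<^sub>R v) + g x" for t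
  obtain d1 where d1: "d1 > 0" "\<And>t. 0 < t \<Longrightarrow> t < d1 \<Longrightarrow> norm (H t - (t * t) *\<^sub>R Pu v) \<le> e * (t * t)"
    using second_difference_estimate[OF U g g'u e, of v] unfolding H_def by blast
  obtain d2 where d2: "d2 > 0" "\<And>t. 0 < t \<Longrightarrow> t < d2 \<Longrightarrow> norm (H t - (t * t) *\<^sub>R Pv u) \<le> e * (t * t)"
    using second_difference_estimate[OF U g g'v e, of u] unfolding H_def by (auto simp: algebra_simps)
  define t where "t = min d1 d2 / 2"
  have t: "0 < t" "t < d1" "t < d2" unfolding t_def using d1 d2 by auto
  have "(t * t) * norm (Pu v - Pv u) = norm ((H t - (t * t) *\<^sub>R Pv u) - (H t - (t * t) *\<^sub>R Pu v))"
    using t by (simp add: algebra_simps norm_minus_commute flip: scaleR_diff_right)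
  also have "\<dots> \<le> norm (H t - (t * t) *\<^sub>R Pv u) + norm (H t - (t * t) *\<^sub>R Pu v)"
    by (rule norm_triangle_ineq4)
  also have "\<dots> \<le> 2 * e * (t * t)" using d1(2)[OF t(1,2)] d2(2)[OF t(1,3)] by simp
  also have "\<dots> = (t * t) * norm (Pu v - Pv u) / 2" unfolding e_def by simp
  finally show False using t ne by simp
qed


section \<open>Gram matrices and Cramer's rule\<close>

definition gram_matrix :: "(real^'n \<Rightarrow> real^'m) \<Rightarrow> real^'n^'n" where
  "gram_matrix A = (\<chi> i j. inner (A (axis i 1)) (A (axis j 1)))"

definition cramer_solve :: "real^'n^'n \<Rightarrow> real^'n \<Rightarrow> real^'n" where
  "cramer_solve G r = (\<chi> k. det (\<chi> i j. if j = k then r $ i else G $ i $ j) / det G)"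

lemma linear_basis_expansion:
  assumes "linear (A :: real^'n \<Rightarrow> 'b::real_vector)"
  shows "A c = (\<Sum>j\<in>UNIV. c $ j *\<^sub>R A (axis j 1))"
proof -
  have "A c = A (\<Sum>j\<in>UNIV. c $ j *\<^sub>R axis j 1)"
    using basis_expansion[of c] by (simp add: scalar_mult_eq_scaleR)
  also have "\<dots> = (\<Sum>j\<in>UNIV. c $ j *\<^sub>R A (axis j 1))"
    using assms by (simp add: linear_sum linear_scale)
  finally show ?thesis .
qed

lemma gram_matrix_mult:
  assumes "linear (A :: real^'n \<Rightarrow> real^'m)"
  shows "(gram_matrix A *v c) $ i = inner (A (axis i 1)) (A c)"
  unfolding gram_matrix_def matrix_vector_mult_def linear_basis_expansion[OF assms, of c]
  by (simp add: inner_sum_right mult.commute)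

lemma det_gram_matrix_nonzero:
  assumes "linear (A :: real^'n \<Rightarrow> real^'m)" "inj A"
  shows "det (gram_matrix A) \<noteq> 0"
proof
  assume "det (gram_matrix A) = 0"
  then have "\<not> invertible (gram_matrix A)" by (simp add: invertible_det_nz)
  then have "\<not> (\<forall>x. gram_matrix A *v x = 0 \<longrightarrow> x = 0)"
    by (simp add: invertible_left_inverse matrix_left_invertible_ker)
  then obtain c where c: "c \<noteq> 0" "gram_matrix A *v c = 0" by blast
  have "inner (A c) (A c) = (\<Sum>j\<in>UNIV. c $ j * (gram_matrix A *v c) $ j)"
    by (subst (1) linear_basis_expansion[OF assms(1)])
       (simp add: inner_sum_left gram_matrix_mult[OF assms(1)])
  also have "\<dots> = 0" using c by simp
  finally have "A c = 0" by simp
  then show False using assms c linear_0 by (metis injD)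
qed

lemma gram_matrix_mult_cramer_solve:
  assumes "linear (A :: real^'n \<Rightarrow> real^'m)" "inj A"
  shows "gram_matrix A *v cramer_solve (gram_matrix A) r = r"
  using cramer[OF det_gram_matrix_nonzero[OF assms], of "cramer_solve (gram_matrix A) r" r]
  unfolding cramer_solve_def by simp

lemma inner_coordinates:
  assumes "linear (B :: real^'n \<Rightarrow> 'b::real_inner)"
  shows "inner (\<chi> i. inner (B (axis i 1)) w) X = inner (B X) w"
  by (subst (2) linear_basis_expansion[OF assms])
     (simp add: inner_vec_def inner_sum_left mult.commute)

lemma inner_cramer_solve:
  assumes "linear (A :: real^'n \<Rightarrow> real^'m)" "inj A"
  shows "inner (A (cramer_solve (gram_matrix A) r)) (A X) = inner r X"
proof -
  have "inner (A (cramer_solve (gram_matrix A) r)) (A X)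
      = (\<Sum>j\<in>UNIV. X $ j * (gram_matrix A *v cramer_solve (gram_matrix A) r) $ j)"
    by (subst (2) linear_basis_expansion[OF assms(1)])
       (simp add: inner_sum_right gram_matrix_mult[OF assms(1)] inner_commute)
  then show ?thesis
    by (simp add: gram_matrix_mult_cramer_solve[OF assms] inner_vec_def mult.commute)
qed

lemma cramer_solve_range:
  assumes "linear (A :: real^'n \<Rightarrow> real^'m)" "inj A"
  shows "cramer_solve (gram_matrix A) (\<chi> i. inner (A (axis i 1)) (A c)) = c"
proof -
  have "gram_matrix A *v c = (\<chi> i. inner (A (axis i 1)) (A c))"
    by (simp add: vec_eq_iff gram_matrix_mult[OF assms(1)])
  then show ?thesis
    using cramer[OF det_gram_matrix_nonzero[OF assms]] unfolding cramer_solve_def by metis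
qed

lemma differentiable_prod_at:
  fixes f :: "'i \<Rightarrow> 'a::real_normed_vector \<Rightarrow> real"
  assumes "\<And>i. i \<in> I \<Longrightarrow> f i differentiable (at x)"
  shows "(\<lambda>z. \<Prod>i\<in>I. f i z) differentiable (at x)"
proof -
  have "\<forall>i\<in>I. (f i has_derivative frechet_derivative (f i) (at x)) (at x)"
    using assms frechet_derivative_works by blast
  then have "((\<lambda>z. \<Prod>i\<in>I. f i z) has_derivative
      (\<lambda>y. \<Sum>i\<in>I. frechet_derivative (f i) (at x) y * (\<Prod>j\<in>I - {i}. f j x))) (at x)"
    by (intro has_derivative_prod) auto
  then show ?thesis unfolding differentiable_def by blast
qed

lemma differentiable_det:
  fixes M :: "'a::real_normed_vector \<Rightarrow> real^'n^'n"
  assumes "\<And>i j. (\<lambda>z. M z $ i $ j) differentiable (at x)"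
  shows "(\<lambda>z. det (M z)) differentiable (at x)"
  unfolding det_def
  by (intro differentiable_sum ballI differentiable_mult differentiable_const differentiable_prod_at assms)
     (simp add: finite_permutations)

lemma differentiable_vec_componentwise:
  fixes F :: "'a::real_normed_vector \<Rightarrow> real^'n"
  assumes "\<And>k. (\<lambda>z. F z $ k) differentiable (at x)"
  shows "F differentiable (at x)"
proof -
  have "F z = (\<Sum>k\<in>UNIV. (F z $ k) *\<^sub>R axis k 1)" for z
    using basis_expansion[of "F z"] by (simp add: scalar_mult_eq_scaleR)
  then have "F = (\<lambda>z. \<Sum>k\<in>UNIV. (F z $ k) *\<^sub>R axis k 1)" by auto
  moreover have "(\<lambda>z. \<Sum>k\<in>UNIV. (F z $ k) *\<^sub>R (axis k 1 :: real^'n)) differentiable (at x)"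
    by (intro differentiable_sum ballI differentiable_scaleR assms differentiable_const) simp
  ultimately show ?thesis by simp
qed

lemma differentiable_cramer_solve:
  fixes G :: "'a::real_normed_vector \<Rightarrow> real^'n^'n" and r :: "'a \<Rightarrow> real^'n"
  assumes "\<And>i j. (\<lambda>z. G z $ i $ j) differentiable (at x)" "\<And>i. (\<lambda>z. r z $ i) differentiable (at x)"
    and "det (G x) \<noteq> 0"
  shows "(\<lambda>z. cramer_solve (G z) (r z)) differentiable (at x)"
proof (rule differentiable_vec_componentwise)
  fix k
  have "(\<lambda>z. det (\<chi> i j. if j = k then r z $ i else G z $ i $ j)) differentiable (at x)"
  proof (rule differentiable_det)
    show "(\<lambda>z. (\<chi> i j. if j = k then r z $ i else G z $ i $ j) $ i $ j) differentiable (at x)" for i j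
      by (cases "j = k") (simp_all add: assms)
  qed
  moreover have "(\<lambda>z. det (G z)) differentiable (at x)" by (rule differentiable_det) (simp add: assms)
  ultimately show "(\<lambda>z. cramer_solve (G z) (r z) $ k) differentiable (at x)"
    unfolding cramer_solve_def using assms(3) by (simp add: differentiable_divide)
qed


section \<open>Derivatives of smooth maps\<close>

definition D2 :: "('a::real_normed_vector \<Rightarrow> 'b::real_normed_vector) \<Rightarrow> 'a \<Rightarrow> 'a \<Rightarrow> 'a \<Rightarrow> 'b" where
  "D2 g z X Y = D (\<lambda>w. D g w Y) z X"

definition D3 :: "('a::real_normed_vector \<Rightarrow> 'b::real_normed_vector) \<Rightarrow> 'a \<Rightarrow> 'a \<Rightarrow> 'a \<Rightarrow> 'a \<Rightarrow> 'b" where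
  "D3 g z Y X Z = D (\<lambda>w. D2 g w X Z) z Y"

lemma D_eqI:
  assumes "(g has_derivative g') (at x)"
  shows "D g x = g'"
  unfolding D_def using frechet_derivative_at[OF assms] by simp

lemma smooth_on_D: "smooth_on U g \<Longrightarrow> smooth_on U (\<lambda>z. D g z v)"
  by (erule smooth_on.cases) (simp add: D_def)

lemma smooth_on_has_derivative:
  assumes "smooth_on U g" "open U" "z \<in> U"
  shows "(g has_derivative D g z) (at z)"
proof -
  from assms(1) have "g differentiable_on U" by (cases rule: smooth_on.cases) auto
  then show ?thesis
    using assms differentiable_on_eq_differentiable_at frechet_derivative_works unfolding D_def by blast
qed

lemma smooth_on_differentiable: "smooth_on U g \<Longrightarrow> open U \<Longrightarrow> z \<in> U \<Longrightarrow> g differentiable (at z)"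
  using smooth_on_has_derivative differentiable_def by blast

lemma linear_D: "smooth_on U g \<Longrightarrow> open U \<Longrightarrow> z \<in> U \<Longrightarrow> linear (D g z)"
  using smooth_on_has_derivative has_derivative_linear by blast

lemma has_derivative_D2:
  assumes "smooth_on U g" "open U" "z \<in> U"
  shows "((\<lambda>w. D g w Y) has_derivative (\<lambda>X. D2 g z X Y)) (at z)"
  using smooth_on_has_derivative[OF smooth_on_D[OF assms(1)] assms(2,3)] unfolding D2_def by simp

lemma has_derivative_D3:
  assumes "smooth_on U g" "open U" "z \<in> U"
  shows "((\<lambda>w. D2 g w X Z) has_derivative (\<lambda>Y. D3 g z Y X Z)) (at z)"
  using smooth_on_has_derivative[OF smooth_on_D[OF smooth_on_D[OF assms(1)]] assms(2,3)]
  unfolding D3_def D2_def by simp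

lemma D2_commute:
  fixes g :: "'a::euclidean_space \<Rightarrow> 'b::real_inner"
  assumes g: "smooth_on U g" and U: "open U" "z \<in> U"
  shows "D2 g z X Y = D2 g z Y X"
proof -
  have "D (\<lambda>w. D g w X) z Y = D (\<lambda>w. D g w Y) z X"
    by (rule second_derivative_symmetric[OF U smooth_on_has_derivative[OF g U(1)]
          smooth_on_has_derivative[OF smooth_on_D[OF g] U] smooth_on_has_derivative[OF smooth_on_D[OF g] U]])
  then show ?thesis unfolding D2_def by simp
qed

lemma D3_commute:
  fixes g :: "'a::euclidean_space \<Rightarrow> 'b::real_inner"
  assumes g: "smooth_on U g" and U: "open U" "z \<in> U"
  shows "D3 g z Y X Z = D3 g z X Y Z"
  using D2_commute[OF smooth_on_D[OF g, where v = Z] U, of Y X] unfolding D3_def D2_def by simp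

lemma D2_linear_right:
  fixes g :: "real^'n \<Rightarrow> 'b::real_normed_vector"
  assumes g: "smooth_on U g" and U: "open U" "x \<in> U"
  shows "D2 g x h v = (\<Sum>j\<in>UNIV. v $ j *\<^sub>R D2 g x h (axis j 1))"
proof -
  have "((\<lambda>z. \<Sum>j\<in>UNIV. v $ j *\<^sub>R D g z (axis j 1)) has_derivative
      (\<lambda>h. \<Sum>j\<in>UNIV. v $ j *\<^sub>R D2 g x h (axis j 1))) (at x)"
    by (intro has_derivative_sum has_derivative_scaleR_right has_derivative_D2[OF g U])
  then have "((\<lambda>z. D g z v) has_derivative (\<lambda>h. \<Sum>j\<in>UNIV. v $ j *\<^sub>R D2 g x h (axis j 1))) (at x)"
  proof (rule has_derivative_transform_within_open[OF _ U])
    show "(\<Sum>j\<in>UNIV. v $ j *\<^sub>R D g z (axis j 1)) = D g z v" if "z \<in> U" for z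
      by (rule linear_basis_expansion[OF linear_D[OF g U(1) that], symmetric])
  qed
  then show ?thesis unfolding D2_def[of g x h v] by (simp add: D_eqI)
qed

lemma has_derivative_D_apply:
  fixes g :: "real^'n \<Rightarrow> 'b::real_normed_vector"
  assumes g: "smooth_on U g" and U: "open U" "x \<in> U" and c: "(c has_derivative c') (at x)"
  shows "((\<lambda>z. D g z (c z)) has_derivative (\<lambda>h. D g x (c' h) + D2 g x h (c x))) (at x)"
proof -
  have cj: "((\<lambda>z. c z $ j) has_derivative (\<lambda>h. c' h $ j)) (at x)" for j
    using bounded_linear.has_derivative[OF bounded_linear_vec_nth c] .
  have "((\<lambda>z. \<Sum>j\<in>UNIV. c z $ j *\<^sub>R D g z (axis j 1)) has_derivative
      (\<lambda>h. \<Sum>j\<in>UNIV. c x $ j *\<^sub>R D2 g x h (axis j 1) + c' h $ j *\<^sub>R D g x (axis j 1))) (at x)"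
    by (intro has_derivative_sum has_derivative_scaleR cj has_derivative_D2[OF g U])
  moreover have "(\<lambda>h. \<Sum>j\<in>UNIV. c x $ j *\<^sub>R D2 g x h (axis j 1) + c' h $ j *\<^sub>R D g x (axis j 1))
      = (\<lambda>h. D g x (c' h) + D2 g x h (c x))"
  proof
    fix h
    show "(\<Sum>j\<in>UNIV. c x $ j *\<^sub>R D2 g x h (axis j 1) + c' h $ j *\<^sub>R D g x (axis j 1))
      = D g x (c' h) + D2 g x h (c x)"
      unfolding linear_basis_expansion[OF linear_D[OF g U], of "c' h"] D2_linear_right[OF g U, of h "c x"]
      by (simp add: sum.distrib)
  qed
  ultimately have "((\<lambda>z. \<Sum>j\<in>UNIV. c z $ j *\<^sub>R D g z (axis j 1)) has_derivative
      (\<lambda>h. D g x (c' h) + D2 g x h (c x))) (at x)" by simp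
  then show ?thesis
  proof (rule has_derivative_transform_within_open[OF _ U])
    show "(\<Sum>j\<in>UNIV. c z $ j *\<^sub>R D g z (axis j 1)) = D g z (c z)" if "z \<in> U" for z
      by (rule linear_basis_expansion[OF linear_D[OF g U(1) that], symmetric])
  qed
qed

lemma derivative_of_locally_constant:
  assumes "open U" "x \<in> U" "(g has_derivative g') (at x)" "\<And>z. z \<in> U \<Longrightarrow> g z = c"
  shows "g' h = 0"
proof -
  have "(g has_derivative (\<lambda>_. 0)) (at x)"
    using has_derivative_transform_within_open[OF has_derivative_const assms(1,2)] assms(4) by metis
  then show ?thesis using has_derivative_unique assms(3) by metis
qed

lemma derivative_inner_const:
  fixes g h :: "'a::real_normed_vector \<Rightarrow> 'b::real_inner"
  assumes "open U" "x \<in> U" "(g has_derivative g') (at x)" "(h has_derivative h') (at x)"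
    and "\<And>z. z \<in> U \<Longrightarrow> inner (g z) (h z) = c"
  shows "inner (g' Y) (h x) + inner (g x) (h' Y) = 0"
  using derivative_of_locally_constant[OF assms(1,2) has_derivative_inner[OF assms(3,4)] assms(5)]
  by (simp add: add.commute)

lemma derivative_inner_sum_const:
  fixes g h k l :: "'a::real_normed_vector \<Rightarrow> 'b::real_inner"
  assumes "open U" "x \<in> U" "(g has_derivative g') (at x)" "(h has_derivative h') (at x)"
    and "(k has_derivative k') (at x)" "(l has_derivative l') (at x)"
    and "\<And>z. z \<in> U \<Longrightarrow> inner (g z) (h z) + inner (k z) (l z) = c"
  shows "inner (g' Y) (h x) + inner (g x) (h' Y) + inner (k' Y) (l x) + inner (k x) (l' Y) = 0"
  using derivative_of_locally_constant[OF assms(1,2)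
      has_derivative_add[OF has_derivative_inner[OF assms(3,4)] has_derivative_inner[OF assms(5,6)]] assms(7)]
  by (simp add: algebra_simps)

lemma has_derivative_D: "g differentiable (at x) \<Longrightarrow> (g has_derivative D g x) (at x)"
  unfolding D_def by (rule frechet_derivative_works[THEN iffD1])


section \<open>Orthogonal projections\<close>

lemma proj_unique:
  fixes S :: "'a::real_inner set"
  assumes "subspace S" "q \<in> S" "\<And>w. w \<in> S \<Longrightarrow> inner (v - q) w = 0"
  shows "proj S v = q"
  unfolding proj_def
proof (rule the_equality)
  show "q \<in> S \<and> (\<forall>w\<in>S. inner (v - q) w = 0)" using assms by simp
  fix q' assume q': "q' \<in> S \<and> (\<forall>w\<in>S. inner (v - q') w = 0)"
  have "q - q' \<in> S" using assms(1,2) q' subspace_diff by blast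
  then have "inner (q - q') (q - q') = inner (v - q') (q - q') - inner (v - q) (q - q')"
    by (simp add: inner_diff_left)
  also have "\<dots> = 0" using q' assms(3) \<open>q - q' \<in> S\<close> by simp
  finally show "q' = q" by simp
qed

lemma
  fixes S :: "'a::euclidean_space set"
  assumes "subspace S"
  shows proj_mem: "proj S v \<in> S"
    and proj_orthogonal: "w \<in> S \<Longrightarrow> inner (v - proj S v) w = 0"
proof -
  obtain y z where yz: "y \<in> span S" "\<And>w. w \<in> span S \<Longrightarrow> orthogonal z w" "v = y + z"
    using orthogonal_subspace_decomp_exists by blast
  have sp: "span S = S" using assms by (simp add: span_eq_iff)
  have "proj S v = y" using proj_unique[OF assms, of y v] yz sp by (simp add: orthogonal_def)
  then show "proj S v \<in> S" "w \<in> S \<Longrightarrow> inner (v - proj S v) w = 0"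
    using yz sp by (auto simp: orthogonal_def)
qed

lemma proj_eq_self: "subspace S \<Longrightarrow> w \<in> S \<Longrightarrow> proj S w = w"
  by (rule proj_unique) auto

lemma proj_inner_mem:
  fixes S :: "'a::euclidean_space set"
  assumes "subspace S" "w \<in> S"
  shows "inner (proj S v) w = inner v w"
  using proj_orthogonal[OF assms] by (simp add: inner_diff_left)

lemma proj_self_adjoint:
  fixes S :: "'a::euclidean_space set"
  assumes "subspace S"
  shows "inner (proj S u) v = inner u (proj S v)"
  using proj_inner_mem[OF assms proj_mem[OF assms], of v u] proj_inner_mem[OF assms proj_mem[OF assms], of u v]
  by (simp add: inner_commute)

lemma linear_proj:
  fixes S :: "'a::euclidean_space set"
  assumes S: "subspace S"
  shows "linear (proj S)"
proof (rule linearI)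
  fix u v
  show "proj S (u + v) = proj S u + proj S v"
  proof (rule proj_unique[OF S])
    show "proj S u + proj S v \<in> S" using proj_mem[OF S] subspace_add[OF S] by blast
    show "inner (u + v - (proj S u + proj S v)) w = 0" if "w \<in> S" for w
      using proj_orthogonal[OF S that, of u] proj_orthogonal[OF S that, of v]
      by (simp add: inner_diff_left inner_add_left)
  qed
next
  fix c u
  show "proj S (c *\<^sub>R u) = c *\<^sub>R proj S u"
  proof (rule proj_unique[OF S])
    show "c *\<^sub>R proj S u \<in> S" using proj_mem[OF S] subspace_scale[OF S] by blast
    show "inner (c *\<^sub>R u - c *\<^sub>R proj S u) w = 0" if "w \<in> S" for w
      using proj_orthogonal[OF S that, of u] by (simp add: inner_diff_left)
  qed
qed

lemma proj_orthogonal_complement: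
  fixes S :: "'a::euclidean_space set"
  assumes S: "subspace S"
  shows "proj {v. \<forall>w\<in>S. inner v w = 0} v = v - proj S v"
proof (rule proj_unique)
  show "subspace {v. \<forall>w\<in>S. inner v w = 0}"
    unfolding subspace_def by (auto simp: inner_add_left)
  show "v - proj S v \<in> {v. \<forall>w\<in>S. inner v w = 0}" using proj_orthogonal[OF S] by blast
  show "inner (v - (v - proj S v)) w = 0" if "w \<in> {v. \<forall>w\<in>S. inner v w = 0}" for w
  proof -
    have "inner w (proj S v) = 0" using that proj_mem[OF S] by blast
    then show ?thesis by (simp add: inner_commute)
  qed
qed

lemma inner_proj_complement:
  fixes S :: "'a::euclidean_space set"
  assumes "subspace S"
  shows "inner (a - proj S a) (b - proj S b) = inner (a - proj S a) b"
  using proj_orthogonal[OF assms proj_mem[OF assms], of a b] by (simp add: inner_diff_right)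

lemma iip_sum_diff: "iip (a + b, a - b) (c + d, c - d) = 2 * (inner a d + inner b c)"
  unfolding iip_def by (simp add: inner_add_left inner_add_right inner_diff_left inner_diff_right inner_commute)

lemma antisymmetric_symmetric_trilinear_zero:
  fixes S :: "'a \<Rightarrow> 'a \<Rightarrow> 'a \<Rightarrow> real"
  assumes "\<And>P Q R. S P Q R = - S Q P R" and "\<And>P Q R. S P Q R = S R Q P"
  shows "S P Q R = 0"
proof -
  have "S P Q R = - S Q P R" "S Q P R = S R P Q" "S R P Q = - S P R Q"
    "S P R Q = S Q R P" "S Q R P = - S R Q P" "S R Q P = S P Q R"
    by (rule assms)+
  then show ?thesis by linarith
qed


section \<open>Bendings satisfying condition (*)\<close>

locale bending_cond_star =
  fixes U :: "(real^'n) set" and f \<tau> \<eta> \<xi> :: "real^'n \<Rightarrow> real^'m"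
  assumes open_U: "open U" and immersion: "immersion_on U f"
    and bending: "infinitesimal_bending U f \<tau>" and star: "cond_star U f \<tau> \<eta> \<xi>"
begin

abbreviation tan_proj :: "real^'n \<Rightarrow> real^'m \<Rightarrow> real^'m" where
  "tan_proj z \<equiv> proj (tan_sp f z)"
abbreviation W_proj :: "real^'n \<Rightarrow> real^'m \<Rightarrow> real^'m" where
  "W_proj z \<equiv> proj (Wsp f \<eta> z)"
abbreviation R_proj :: "real^'n \<Rightarrow> real^'m \<Rightarrow> real^'m" where
  "R_proj z \<equiv> proj (Rsp f \<eta> z)"
abbreviation Lb :: "real^'n \<Rightarrow> real^'m \<Rightarrow> real^'m" where
  "Lb z \<equiv> Lbar f \<tau> \<eta> \<xi> z"

lemma smooth_f: "smooth_on U f"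
  using immersion unfolding immersion_on_def by blast
lemma smooth_tau: "smooth_on U \<tau>"
  using bending unfolding infinitesimal_bending_def by blast
lemma smooth_eta: "smooth_on U \<eta>"
  using star unfolding cond_star_def by blast
lemma smooth_xi: "smooth_on U \<xi>"
  using star unfolding cond_star_def by blast
lemma inj_Df: "z \<in> U \<Longrightarrow> inj (D f z)"
  using immersion unfolding immersion_on_def by blast
lemma linear_Df: "z \<in> U \<Longrightarrow> linear (D f z)"
  using linear_D[OF smooth_f open_U] .
lemma linear_Dtau: "z \<in> U \<Longrightarrow> linear (D \<tau> z)"
  using linear_D[OF smooth_tau open_U] .

lemma
  assumes "z \<in> U"
  shows eta_mem_nor_sp: "\<eta> z \<in> nor_sp f z" and eta_unit: "inner (\<eta> z) (\<eta> z) = 1"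
    and xi_mem_Rsp: "\<xi> z \<in> Rsp f \<eta> z"
    and cond_star_at: "inner (beta f \<tau> z X Y) (\<eta> z) + inner (sff f z X Y) (\<xi> z) = 0"
  using star assms unfolding cond_star_def by (auto simp: power2_norm_eq_inner[symmetric])

lemma eta_normal: "z \<in> U \<Longrightarrow> inner (\<eta> z) (D f z X) = 0"
  using eta_mem_nor_sp unfolding nor_sp_def tan_sp_def by blast
lemma xi_normal: "z \<in> U \<Longrightarrow> inner (\<xi> z) (D f z X) = 0"
  using xi_mem_Rsp unfolding Rsp_def nor_sp_def tan_sp_def by blast
lemma xi_orthogonal_eta: "z \<in> U \<Longrightarrow> inner (\<xi> z) (\<eta> z) = 0"
  using xi_mem_Rsp unfolding Rsp_def by blast

lemma bending_skew:
  assumes z: "z \<in> U"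
  shows "inner (D f z P) (D \<tau> z Q) + inner (D f z Q) (D \<tau> z P) = 0"
proof -
  have "inner (D f z X) (D \<tau> z X) = 0" for X
    using bending z unfolding infinitesimal_bending_def by blast
  from this[of "P + Q"] this[of P] this[of Q] show ?thesis
    by (simp add: linear_add[OF linear_Df[OF z]] linear_add[OF linear_Dtau[OF z]]
        inner_add_left inner_add_right)
qed

lemma subspace_tan_sp: "z \<in> U \<Longrightarrow> subspace (tan_sp f z)"
  unfolding tan_sp_def by (rule linear_subspace_image[OF linear_Df subspace_UNIV])

lemma subspace_nor_sp: "subspace (nor_sp f z)"
  unfolding subspace_def nor_sp_def by (auto simp: inner_add_left)

lemma tan_proj_range: "z \<in> U \<Longrightarrow> \<exists>V. tan_proj z u = D f z V"
  using proj_mem[OF subspace_tan_sp] unfolding tan_sp_def by blast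

lemma tan_proj_tangent: "z \<in> U \<Longrightarrow> tan_proj z (D f z V) = D f z V"
  using proj_eq_self[OF subspace_tan_sp] unfolding tan_sp_def by blast

lemma tan_proj_eta:
  assumes z: "z \<in> U"
  shows "tan_proj z (\<eta> z) = 0"
proof (rule proj_unique[OF subspace_tan_sp[OF z]])
  show "0 \<in> tan_sp f z" using subspace_0[OF subspace_tan_sp[OF z]] .
  show "inner (\<eta> z - 0) w = 0" if "w \<in> tan_sp f z" for w
    using that eta_normal[OF z] unfolding tan_sp_def by auto
qed

lemma Lop_tangent: "z \<in> U \<Longrightarrow> Lop f \<tau> z (D f z V) = D \<tau> z V"
  unfolding Lop_def using inj_Df by (simp add: inj_eq)

lemma subspace_Wsp:
  assumes z: "z \<in> U"
  shows "subspace (Wsp f \<eta> z)"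
  unfolding subspace_def Wsp_def
proof (intro conjI allI ballI impI)
  show "0 \<in> {w + t *\<^sub>R \<eta> z |w t. w \<in> tan_sp f z}"
    using subspace_0[OF subspace_tan_sp[OF z]] by (intro CollectI exI[of _ 0]) simp
next
  fix a b
  assume "a \<in> {w + t *\<^sub>R \<eta> z |w t. w \<in> tan_sp f z}" "b \<in> {w + t *\<^sub>R \<eta> z |w t. w \<in> tan_sp f z}"
  then obtain w1 t1 w2 t2 where "a = w1 + t1 *\<^sub>R \<eta> z" "w1 \<in> tan_sp f z"
    and "b = w2 + t2 *\<^sub>R \<eta> z" "w2 \<in> tan_sp f z"
    by blast
  then show "a + b \<in> {w + t *\<^sub>R \<eta> z |w t. w \<in> tan_sp f z}"
    using subspace_add[OF subspace_tan_sp[OF z]]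
    by (intro CollectI exI[of _ "w1 + w2"] exI[of _ "t1 + t2"]) (simp add: algebra_simps)
next
  fix c a
  assume "a \<in> {w + t *\<^sub>R \<eta> z |w t. w \<in> tan_sp f z}"
  then obtain w1 t1 where "a = w1 + t1 *\<^sub>R \<eta> z" "w1 \<in> tan_sp f z" by blast
  then show "c *\<^sub>R a \<in> {w + t *\<^sub>R \<eta> z |w t. w \<in> tan_sp f z}"
    using subspace_scale[OF subspace_tan_sp[OF z]]
    by (intro CollectI exI[of _ "c *\<^sub>R w1"] exI[of _ "c * t1"]) (simp add: algebra_simps)
qed

lemma W_proj_eq:
  assumes z: "z \<in> U"
  shows "W_proj z v = tan_proj z v + inner v (\<eta> z) *\<^sub>R \<eta> z"
proof (rule proj_unique[OF subspace_Wsp[OF z]])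
  show "tan_proj z v + inner v (\<eta> z) *\<^sub>R \<eta> z \<in> Wsp f \<eta> z"
    unfolding Wsp_def using proj_mem[OF subspace_tan_sp[OF z]] by blast
  have Tv: "inner (tan_proj z v) (\<eta> z) = 0"
    using proj_inner_mem[OF subspace_tan_sp[OF z], of _ v] tan_proj_eta[OF z]
      proj_self_adjoint[OF subspace_tan_sp[OF z], of v "\<eta> z"] by simp
  show "inner (v - (tan_proj z v + inner v (\<eta> z) *\<^sub>R \<eta> z)) w = 0" if wW: "w \<in> Wsp f \<eta> z" for w
  proof -
    obtain X t where w: "w = D f z X + t *\<^sub>R \<eta> z"
      using wW unfolding Wsp_def tan_sp_def by blast
    have "inner (v - tan_proj z v) (D f z X) = 0"
      using proj_orthogonal[OF subspace_tan_sp[OF z]] unfolding tan_sp_def by blast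
    then show ?thesis
      using Tv eta_unit[OF z] eta_normal[OF z, of X] unfolding w
      by (simp add: inner_add_right inner_diff_left inner_commute algebra_simps)
  qed
qed

lemma Rsp_eq_orthogonal_Wsp:
  assumes z: "z \<in> U"
  shows "Rsp f \<eta> z = {v. \<forall>w\<in>Wsp f \<eta> z. inner v w = 0}"
proof (intro set_eqI iffI)
  fix v assume "v \<in> Rsp f \<eta> z"
  then show "v \<in> {v. \<forall>w\<in>Wsp f \<eta> z. inner v w = 0}"
    unfolding Rsp_def nor_sp_def Wsp_def by (auto simp: inner_add_right)
next
  fix v assume v: "v \<in> {v. \<forall>w\<in>Wsp f \<eta> z. inner v w = 0}"
  have "w + 0 *\<^sub>R \<eta> z \<in> Wsp f \<eta> z" if "w \<in> tan_sp f z" for w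
    using that unfolding Wsp_def by blast
  moreover have "0 + 1 *\<^sub>R \<eta> z \<in> Wsp f \<eta> z"
    using subspace_0[OF subspace_tan_sp[OF z]] unfolding Wsp_def by blast
  ultimately show "v \<in> Rsp f \<eta> z"
    using v unfolding Rsp_def nor_sp_def by auto
qed

lemma R_proj_eq: "z \<in> U \<Longrightarrow> R_proj z v = v - W_proj z v"
  using proj_orthogonal_complement[OF subspace_Wsp] Rsp_eq_orthogonal_Wsp by simp

lemma R_proj_tangent: "z \<in> U \<Longrightarrow> R_proj z (D f z V) = 0"
  by (simp add: R_proj_eq W_proj_eq tan_proj_tangent eta_normal inner_commute)

lemma R_proj_eta: "z \<in> U \<Longrightarrow> R_proj z (\<eta> z) = 0"
  by (simp add: R_proj_eq W_proj_eq tan_proj_eta eta_unit)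

lemma linear_R_proj:
  assumes z: "z \<in> U"
  shows "linear (R_proj z)"
proof -
  have "R_proj z = (\<lambda>v. v - W_proj z v)" using R_proj_eq[OF z] by auto
  then show ?thesis
    using linear_compose_sub[OF linear_ident linear_proj[OF subspace_Wsp[OF z]]] by simp
qed

(* Solving for the coordinates of Y by Cramer's rule makes them differentiable in the point. *)
definition Y_coords :: "real^'n \<Rightarrow> real^'n" where
  "Y_coords z = cramer_solve (gram_matrix (D f z)) (\<chi> i. inner (D \<tau> z (axis i 1)) (- \<eta> z))"

lemma inner_Df_Y_coords:
  assumes z: "z \<in> U"
  shows "inner (D f z (Y_coords z)) (D f z X) = - inner (D \<tau> z X) (\<eta> z)"
  unfolding Y_coords_def inner_cramer_solve[OF linear_Df[OF z] inj_Df[OF z]]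
    inner_coordinates[OF linear_Dtau[OF z]] by simp

lemma Ytan_eq:
  assumes z: "z \<in> U"
  shows "Ytan f \<tau> \<eta> z = D f z (Y_coords z)"
  unfolding Ytan_def
proof (rule the_equality)
  show "D f z (Y_coords z) \<in> tan_sp f z \<and>
      (\<forall>X. inner (D f z (Y_coords z)) (D f z X) + inner (D \<tau> z X) (\<eta> z) = 0)"
    unfolding tan_sp_def by (simp add: inner_Df_Y_coords[OF z])
  fix y assume y: "y \<in> tan_sp f z \<and> (\<forall>X. inner y (D f z X) + inner (D \<tau> z X) (\<eta> z) = 0)"
  then obtain V where V: "y = D f z V" unfolding tan_sp_def by blast
  have "inner (y - D f z (Y_coords z)) (D f z X) = 0" for X
    using y inner_Df_Y_coords[OF z, of X] by (simp add: inner_diff_left)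
  from this[of "V - Y_coords z"] show "y = D f z (Y_coords z)"
    using V by (simp add: linear_diff[OF linear_Df[OF z]])
qed

definition zeta :: "real^'n \<Rightarrow> real^'m" where
  "zeta z = Ytan f \<tau> \<eta> z + \<xi> z"

lemma zeta_tangent: "z \<in> U \<Longrightarrow> inner (zeta z) (D f z X) + inner (D \<tau> z X) (\<eta> z) = 0"
  by (simp add: zeta_def Ytan_eq inner_add_left inner_Df_Y_coords xi_normal)

lemma zeta_eta:
  assumes z: "z \<in> U"
  shows "inner (zeta z) (\<eta> z) = 0"
proof -
  have "inner (D f z (Y_coords z)) (\<eta> z) = 0" using eta_normal[OF z] by (simp add: inner_commute)
  then show ?thesis using xi_orthogonal_eta[OF z] by (simp add: zeta_def Ytan_eq[OF z] inner_add_left)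
qed

lemma differentiable_Df: "x \<in> U \<Longrightarrow> (\<lambda>z. D f z v) differentiable (at x)"
  using has_derivative_D2[OF smooth_f open_U] unfolding differentiable_def by blast

lemma differentiable_Dtau: "x \<in> U \<Longrightarrow> (\<lambda>z. D \<tau> z v) differentiable (at x)"
  using has_derivative_D2[OF smooth_tau open_U] unfolding differentiable_def by blast

lemma differentiable_cramer_solve_gram:
  assumes x: "x \<in> U" and r: "\<And>i. (\<lambda>z. r z $ i) differentiable (at x)"
  shows "(\<lambda>z. cramer_solve (gram_matrix (D f z)) (r z)) differentiable (at x)"
proof (rule differentiable_cramer_solve)
  show "(\<lambda>z. gram_matrix (D f z) $ i $ j) differentiable (at x)" for i j
    unfolding gram_matrix_def using differentiable_Df[OF x] by simp
  show "det (gram_matrix (D f x)) \<noteq> 0"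
    by (rule det_gram_matrix_nonzero[OF linear_Df[OF x] inj_Df[OF x]])
qed (rule r)

lemma zeta_has_derivative:
  assumes x: "x \<in> U"
  shows "(zeta has_derivative D zeta x) (at x)"
proof -
  have "Y_coords differentiable (at x)"
    unfolding Y_coords_def
    by (rule differentiable_cramer_solve_gram[OF x])
       (simp add: differentiable_Dtau[OF x] smooth_on_differentiable[OF smooth_eta open_U x])
  then have "((\<lambda>z. D f z (Y_coords z) + \<xi> z) has_derivative
      (\<lambda>h. D f x (D Y_coords x h) + D2 f x h (Y_coords x) + D \<xi> x h)) (at x)"
    by (intro has_derivative_add has_derivative_D_apply[OF smooth_f open_U x] has_derivative_D
        smooth_on_has_derivative[OF smooth_xi open_U x])
  then have "(zeta has_derivative (\<lambda>h. D f x (D Y_coords x h) + D2 f x h (Y_coords x) + D \<xi> x h)) (at x)"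
    by (rule has_derivative_transform_within_open[OF _ open_U x]) (simp add: zeta_def Ytan_eq)
  then show ?thesis by (intro has_derivative_D) (auto simp: differentiable_def)
qed

lemma Lbar_eq:
  assumes z: "z \<in> U" and V: "tan_proj z u = D f z V"
  shows "Lb z u = D \<tau> z V + inner u (\<eta> z) *\<^sub>R zeta z"
  unfolding Lbar_def V Lop_tangent[OF z] zeta_def ..

lemma Lbar_tangent: "z \<in> U \<Longrightarrow> Lb z (D f z V) = D \<tau> z V"
  using Lbar_eq[OF _ tan_proj_tangent] eta_normal by (simp add: inner_commute)

lemma Lbar_eta: "z \<in> U \<Longrightarrow> Lb z (\<eta> z) = zeta z"
  using Lbar_eq[of z "\<eta> z" 0] tan_proj_eta eta_unit linear_0[OF linear_Df] linear_0[OF linear_Dtau]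
  by simp

lemma linear_Lbar:
  assumes z: "z \<in> U"
  shows "linear (Lb z)"
proof (rule linearI)
  fix u v c
  obtain V1 V2 where V1: "tan_proj z u = D f z V1" and V2: "tan_proj z v = D f z V2"
    using tan_proj_range[OF z] by metis
  note T = linear_proj[OF subspace_tan_sp[OF z]]
  have "tan_proj z (u + v) = D f z (V1 + V2)"
    using V1 V2 by (simp add: linear_add[OF T] linear_add[OF linear_Df[OF z]])
  then show "Lb z (u + v) = Lb z u + Lb z v"
    using Lbar_eq[OF z V1] Lbar_eq[OF z V2] Lbar_eq[OF z]
    by (simp add: linear_add[OF linear_Dtau[OF z]] inner_add_left algebra_simps)
  have "tan_proj z (c *\<^sub>R u) = D f z (c *\<^sub>R V1)"
    using V1 by (simp add: linear_scale[OF T] linear_scale[OF linear_Df[OF z]])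
  then show "Lb z (c *\<^sub>R u) = c *\<^sub>R Lb z u"
    using Lbar_eq[OF z V1] Lbar_eq[OF z] by (simp add: linear_scale[OF linear_Dtau[OF z]] algebra_simps)
qed

lemma Lbar_W_proj:
  assumes z: "z \<in> U"
  shows "Lb z (W_proj z v) = Lb z v"
proof -
  obtain V where V: "tan_proj z v = D f z V" using tan_proj_range[OF z] by blast
  have "tan_proj z (W_proj z v) = D f z V"
    using V tan_proj_tangent[OF z] tan_proj_eta[OF z]
    by (simp add: W_proj_eq[OF z] linear_add[OF linear_proj[OF subspace_tan_sp[OF z]]]
        linear_scale[OF linear_proj[OF subspace_tan_sp[OF z]]])
  moreover have "inner (D f z V) (\<eta> z) = 0" using eta_normal[OF z] by (simp add: inner_commute)
  then have "inner (W_proj z v) (\<eta> z) = inner v (\<eta> z)"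
    using V eta_unit[OF z] by (simp add: W_proj_eq[OF z] inner_add_left)
  ultimately show ?thesis using Lbar_eq[OF z] V by simp
qed

lemma Lbar_skew:
  assumes z: "z \<in> U"
  shows "inner (Lb z u) (W_proj z w) + inner (W_proj z u) (Lb z w) = 0"
proof -
  obtain V1 V2 where V1: "tan_proj z u = D f z V1" and V2: "tan_proj z w = D f z V2"
    using tan_proj_range[OF z] by metis
  define a b where "a = inner u (\<eta> z)" and "b = inner w (\<eta> z)"
  have "inner (Lb z u) (W_proj z w) + inner (W_proj z u) (Lb z w)
      = (inner (D f z V2) (D \<tau> z V1) + inner (D f z V1) (D \<tau> z V2))
        + a * (inner (zeta z) (D f z V2) + inner (D \<tau> z V2) (\<eta> z))
        + b * (inner (zeta z) (D f z V1) + inner (D \<tau> z V1) (\<eta> z))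
        + 2 * a * b * inner (zeta z) (\<eta> z)"
    unfolding Lbar_eq[OF z V1] Lbar_eq[OF z V2] W_proj_eq[OF z] V1 V2 a_def[symmetric] b_def[symmetric]
    by (simp add: inner_add_left inner_add_right inner_commute algebra_simps)
  then show ?thesis
    using bending_skew[OF z, of V2 V1] zeta_tangent[OF z] zeta_eta[OF z] by simp
qed

lemma second_derivative_bending:
  assumes x: "x \<in> U"
  shows "inner (D2 f x X Z) (D \<tau> x V) + inner (D2 \<tau> x X Z) (D f x V) = 0"
proof -
  define S where "S P Q R = inner (D2 f x R P) (D \<tau> x Q) + inner (D2 \<tau> x R P) (D f x Q)" for P Q R
  have "S P Q R = - S Q P R" for P Q R
  proof -
    have "inner (D2 f x R P) (D \<tau> x Q) + inner (D f x P) (D2 \<tau> x R Q)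
        + inner (D2 f x R Q) (D \<tau> x P) + inner (D f x Q) (D2 \<tau> x R P) = 0"
      by (rule derivative_inner_sum_const[OF open_U x has_derivative_D2[OF smooth_f open_U x]
            has_derivative_D2[OF smooth_tau open_U x] has_derivative_D2[OF smooth_f open_U x]
            has_derivative_D2[OF smooth_tau open_U x]])
         (rule bending_skew)
    then show ?thesis unfolding S_def by (simp add: inner_commute algebra_simps)
  qed
  moreover have "S P Q R = S R Q P" for P Q R
    unfolding S_def D2_commute[OF smooth_f open_U x, of R P] D2_commute[OF smooth_tau open_U x, of R P] ..
  ultimately have "S Z V X = 0" by (rule antisymmetric_symmetric_trilinear_zero)
  then show ?thesis unfolding S_def .
qed

lemma third_derivative_bending:
  assumes x: "x \<in> U"
  shows "inner (D2 f x X c) (D2 \<tau> x Y c') + inner (D2 \<tau> x X c) (D2 f x Y c')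
       = inner (D2 f x Y c) (D2 \<tau> x X c') + inner (D2 \<tau> x Y c) (D2 f x X c')"
proof -
  have "inner (D3 f x Y X c) (D \<tau> x c') + inner (D2 f x X c) (D2 \<tau> x Y c')
      + inner (D3 \<tau> x Y X c) (D f x c') + inner (D2 \<tau> x X c) (D2 f x Y c') = 0" for X Y
    by (rule derivative_inner_sum_const[OF open_U x has_derivative_D3[OF smooth_f open_U x]
          has_derivative_D2[OF smooth_tau open_U x] has_derivative_D3[OF smooth_tau open_U x]
          has_derivative_D2[OF smooth_f open_U x]])
       (rule second_derivative_bending)
  from this[of X Y] this[of Y X] show ?thesis
    using D3_commute[OF smooth_f open_U x, of Y X c] D3_commute[OF smooth_tau open_U x, of Y X c] by simp
qed

lemma cond_star_D2:
  assumes z: "z \<in> U"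
  shows "inner (D2 \<tau> z X Z) (\<eta> z) + inner (D2 f z X Z) (zeta z) = 0"
proof -
  obtain V where V: "tan_proj z (D2 f z X Z) = D f z V" using tan_proj_range[OF z] by blast
  have DL: "D (\<lambda>w. Lop f \<tau> w (D f w Z)) z = (\<lambda>X. D2 \<tau> z X Z)"
  proof (rule D_eqI, rule has_derivative_transform_within_open[OF has_derivative_D2[OF smooth_tau open_U z] open_U z])
    show "D \<tau> w Z = Lop f \<tau> w (D f w Z)" if "w \<in> U" for w using Lop_tangent[OF that] by simp
  qed
  have "inner (Ytan f \<tau> \<eta> z) (D2 f z X Z) = inner (Ytan f \<tau> \<eta> z) (D f z V)"
    using proj_inner_mem[OF subspace_tan_sp[OF z], of "Ytan f \<tau> \<eta> z" "D2 f z X Z"] V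
    by (simp add: Ytan_eq[OF z] tan_sp_def inner_commute)
  then have "inner (Bten f \<tau> z X Z) (\<eta> z) = inner (D2 \<tau> z X Z) (\<eta> z) + inner (Ytan f \<tau> \<eta> z) (D2 f z X Z)"
    unfolding Bten_def lc_def D2_def[symmetric] V DL Lop_tangent[OF z]
    by (simp add: inner_diff_left Ytan_eq[OF z] inner_Df_Y_coords[OF z])
  moreover have "inner (beta f \<tau> z X Z) (\<eta> z) = inner (Bten f \<tau> z X Z) (\<eta> z)"
    unfolding beta_def by (rule proj_inner_mem[OF subspace_nor_sp eta_mem_nor_sp[OF z]])
  moreover have "inner (sff f z X Z) (\<xi> z) = inner (D2 f z X Z) (\<xi> z)"
    using xi_mem_Rsp[OF z] unfolding sff_def D2_def[symmetric] Rsp_def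
    by (intro proj_inner_mem[OF subspace_nor_sp]) auto
  ultimately show ?thesis
    using cond_star_at[OF z, of X Z] by (simp add: zeta_def inner_add_right inner_commute)
qed

lemma derivative_cond_star:
  assumes x: "x \<in> U"
  shows "inner (D2 f x X c) (D zeta x Y) + inner (D2 \<tau> x X c) (D \<eta> x Y)
       = inner (D2 f x Y c) (D zeta x X) + inner (D2 \<tau> x Y c) (D \<eta> x X)"
proof -
  have "inner (D3 \<tau> x Y X c) (\<eta> x) + inner (D2 \<tau> x X c) (D \<eta> x Y)
      + inner (D3 f x Y X c) (zeta x) + inner (D2 f x X c) (D zeta x Y) = 0" for X Y
    by (rule derivative_inner_sum_const[OF open_U x has_derivative_D3[OF smooth_tau open_U x]
          smooth_on_has_derivative[OF smooth_eta open_U x] has_derivative_D3[OF smooth_f open_U x]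
          zeta_has_derivative[OF x]])
       (rule cond_star_D2)
  from this[of X Y] this[of Y X] show ?thesis
    using D3_commute[OF smooth_f open_U x, of Y X c] D3_commute[OF smooth_tau open_U x, of Y X c] by simp
qed

lemma derivative_zeta_eta:
  assumes x: "x \<in> U"
  shows "inner (D zeta x Y) (\<eta> x) + inner (zeta x) (D \<eta> x Y) = 0"
  by (rule derivative_inner_const[OF open_U x zeta_has_derivative[OF x]
        smooth_on_has_derivative[OF smooth_eta open_U x]])
     (rule zeta_eta)

lemma derivative_zeta_tangent:
  assumes x: "x \<in> U"
  shows "inner (D zeta x Y) (D f x V) + inner (D \<tau> x V) (D \<eta> x Y) = 0"
proof -
  have "inner (D zeta x Y) (D f x V) + inner (zeta x) (D2 f x Y V)
      + inner (D2 \<tau> x Y V) (\<eta> x) + inner (D \<tau> x V) (D \<eta> x Y) = 0"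
    by (rule derivative_inner_sum_const[OF open_U x zeta_has_derivative[OF x]
          has_derivative_D2[OF smooth_f open_U x] has_derivative_D2[OF smooth_tau open_U x]
          smooth_on_has_derivative[OF smooth_eta open_U x]])
       (rule zeta_tangent)
  then show ?thesis using cond_star_D2[OF x, of Y V] by (simp add: inner_commute)
qed

(* The derivatives of f_* c + s eta and of its bar L-image tau_* c + s zeta with the
   coefficients c, s frozen; cf. D_section and D_Lbar_section. *)
definition frozen_D :: "real^'n \<Rightarrow> real^'n \<Rightarrow> real^'n \<Rightarrow> real \<Rightarrow> real^'m" where
  "frozen_D z X c s = D2 f z X c + s *\<^sub>R D \<eta> z X"

definition frozen_DL :: "real^'n \<Rightarrow> real^'n \<Rightarrow> real^'n \<Rightarrow> real \<Rightarrow> real^'m" where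
  "frozen_DL z X c s = D2 \<tau> z X c + s *\<^sub>R D zeta z X"

lemma frozen_compatible:
  assumes x: "x \<in> U"
  shows "inner (frozen_D x X c s) (Lb x w) + inner (frozen_DL x X c s) (W_proj x w) = 0"
proof -
  obtain V where V: "tan_proj x w = D f x V" using tan_proj_range[OF x] by blast
  define a where "a = inner w (\<eta> x)"
  have "inner (frozen_D x X c s) (Lb x w) + inner (frozen_DL x X c s) (W_proj x w)
      = (inner (D2 f x X c) (D \<tau> x V) + inner (D2 \<tau> x X c) (D f x V))
        + a * (inner (D2 \<tau> x X c) (\<eta> x) + inner (D2 f x X c) (zeta x))
        + s * (inner (D zeta x X) (D f x V) + inner (D \<tau> x V) (D \<eta> x X))
        + s * a * (inner (D zeta x X) (\<eta> x) + inner (zeta x) (D \<eta> x X))"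
    unfolding frozen_D_def frozen_DL_def Lbar_eq[OF x V] W_proj_eq[OF x] V a_def[symmetric]
    by (simp add: inner_add_left inner_add_right inner_commute algebra_simps)
  then show ?thesis
    using second_derivative_bending[OF x] cond_star_D2[OF x] derivative_zeta_tangent[OF x]
      derivative_zeta_eta[OF x]
    by simp
qed

lemma inner_R_proj_frozen:
  fixes X Y c c' :: "real^'n" and s s' :: real
  assumes x: "x \<in> U"
  defines "u \<equiv> frozen_D x X c s" and "p \<equiv> frozen_DL x X c s"
    and "v \<equiv> frozen_D x Y c' s'" and "q \<equiv> frozen_DL x Y c' s'"
  shows "inner (R_proj x u) (R_proj x (q - Lb x v)) + inner (R_proj x (p - Lb x u)) (R_proj x v)
       = inner u q + inner p v"
proof -
  note complement = inner_proj_complement[OF subspace_Wsp[OF x]]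
  have "inner (R_proj x u) (R_proj x (q - Lb x v)) = inner (u - W_proj x u) (q - Lb x v)"
    unfolding R_proj_eq[OF x] complement ..
  moreover have "inner (R_proj x (p - Lb x u)) (R_proj x v) = inner (v - W_proj x v) (p - Lb x u)"
    unfolding R_proj_eq[OF x] by (metis complement inner_commute)
  ultimately have "inner (R_proj x u) (R_proj x (q - Lb x v)) + inner (R_proj x (p - Lb x u)) (R_proj x v)
      = inner (u - W_proj x u) (q - Lb x v) + inner (v - W_proj x v) (p - Lb x u)"
    by simp
  also have "\<dots> = inner u q + inner p v
      - (inner u (Lb x v) + inner p (W_proj x v)) - (inner v (Lb x u) + inner q (W_proj x u))
      + (inner (Lb x u) (W_proj x v) + inner (W_proj x u) (Lb x v))"
    by (simp add: inner_diff_left inner_diff_right inner_commute algebra_simps)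
  also have "\<dots> = inner u q + inner p v"
    using frozen_compatible[OF x] Lbar_skew[OF x] unfolding u_def p_def v_def q_def by simp
  finally show ?thesis .
qed

lemma frozen_symmetric:
  assumes x: "x \<in> U"
  shows "inner (frozen_D x X c s) (frozen_DL x Y c' s') + inner (frozen_DL x X c s) (frozen_D x Y c' s')
       = inner (frozen_D x X c' s') (frozen_DL x Y c s) + inner (frozen_DL x X c' s') (frozen_D x Y c s)"
proof -
  have expand: "inner (frozen_D x X c s) (frozen_DL x Y c' s') + inner (frozen_DL x X c s) (frozen_D x Y c' s')
      = (inner (D2 f x X c) (D2 \<tau> x Y c') + inner (D2 \<tau> x X c) (D2 f x Y c'))
        + s' * (inner (D2 f x X c) (D zeta x Y) + inner (D2 \<tau> x X c) (D \<eta> x Y))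
        + s * (inner (D2 f x Y c') (D zeta x X) + inner (D2 \<tau> x Y c') (D \<eta> x X))
        + s * s' * (inner (D \<eta> x X) (D zeta x Y) + inner (D zeta x X) (D \<eta> x Y))" for c s c' s'
    unfolding frozen_D_def frozen_DL_def
    by (simp add: inner_add_left inner_add_right inner_commute algebra_simps)
  show ?thesis
    unfolding expand third_derivative_bending[OF x, of X c Y c'] derivative_cond_star[OF x, of X c Y]
      derivative_cond_star[OF x, of X c' Y]
    by (simp add: inner_commute algebra_simps)
qed

definition sec_coeff :: "(real^'n \<Rightarrow> real^'m) \<Rightarrow> real^'n \<Rightarrow> real" where
  "sec_coeff lam z = inner (lam z) (\<eta> z)"

definition sec_coords :: "(real^'n \<Rightarrow> real^'m) \<Rightarrow> real^'n \<Rightarrow> real^'n" where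
  "sec_coords lam z = cramer_solve (gram_matrix (D f z))
     (\<chi> i. inner (D f z (axis i 1)) (lam z - sec_coeff lam z *\<^sub>R \<eta> z))"

lemma section_decomp:
  assumes z: "z \<in> U" and lam: "lam z \<in> Wsp f \<eta> z"
  shows "lam z = D f z (sec_coords lam z) + sec_coeff lam z *\<^sub>R \<eta> z"
proof -
  obtain V t where lamz: "lam z = D f z V + t *\<^sub>R \<eta> z"
    using lam unfolding Wsp_def tan_sp_def by blast
  have "inner (D f z V) (\<eta> z) = 0" using eta_normal[OF z] by (simp add: inner_commute)
  then have t: "sec_coeff lam z = t"
    unfolding sec_coeff_def lamz using eta_unit[OF z] by (simp add: inner_add_left)
  then have "sec_coords lam z = V"
    unfolding sec_coords_def using lamz cramer_solve_range[OF linear_Df[OF z] inj_Df[OF z]] by simp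
  then show ?thesis using lamz t by simp
qed

context
  fixes lam x
  assumes x: "x \<in> U" and smooth_lam: "smooth_on U lam" and lam_W: "\<forall>z\<in>U. lam z \<in> Wsp f \<eta> z"
begin

lemma differentiable_sec_coeff: "sec_coeff lam differentiable (at x)"
  unfolding sec_coeff_def
  using smooth_on_differentiable[OF smooth_lam open_U x] smooth_on_differentiable[OF smooth_eta open_U x]
  by (simp add: differentiable_inner)

lemma differentiable_sec_coords: "sec_coords lam differentiable (at x)"
  unfolding sec_coords_def
  by (rule differentiable_cramer_solve_gram[OF x])
     (simp add: differentiable_Df[OF x] differentiable_sec_coeff
        smooth_on_differentiable[OF smooth_lam open_U x] smooth_on_differentiable[OF smooth_eta open_U x])

lemma D_section:
  "D lam x X = D f x (D (sec_coords lam) x X) + D (sec_coeff lam) x X *\<^sub>R \<eta> x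
     + frozen_D x X (sec_coords lam x) (sec_coeff lam x)"
proof -
  have "((\<lambda>z. D f z (sec_coords lam z) + sec_coeff lam z *\<^sub>R \<eta> z) has_derivative
      (\<lambda>h. D f x (D (sec_coords lam) x h) + D2 f x h (sec_coords lam x)
         + (sec_coeff lam x *\<^sub>R D \<eta> x h + D (sec_coeff lam) x h *\<^sub>R \<eta> x))) (at x)"
    by (intro has_derivative_add has_derivative_scaleR has_derivative_D_apply[OF smooth_f open_U x]
        has_derivative_D differentiable_sec_coords differentiable_sec_coeff
        smooth_on_has_derivative[OF smooth_eta open_U x])
  then have "(lam has_derivative
      (\<lambda>h. D f x (D (sec_coords lam) x h) + D2 f x h (sec_coords lam x)
         + (sec_coeff lam x *\<^sub>R D \<eta> x h + D (sec_coeff lam) x h *\<^sub>R \<eta> x))) (at x)"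
    by (rule has_derivative_transform_within_open[OF _ open_U x])
       (use lam_W section_decomp in auto)
  from D_eqI[OF this] show ?thesis by (simp add: frozen_D_def algebra_simps)
qed

lemma D_Lbar_section:
  "D (\<lambda>z. Lb z (lam z)) x X = D \<tau> x (D (sec_coords lam) x X) + D (sec_coeff lam) x X *\<^sub>R zeta x
     + frozen_DL x X (sec_coords lam x) (sec_coeff lam x)"
proof -
  have "((\<lambda>z. D \<tau> z (sec_coords lam z) + sec_coeff lam z *\<^sub>R zeta z) has_derivative
      (\<lambda>h. D \<tau> x (D (sec_coords lam) x h) + D2 \<tau> x h (sec_coords lam x)
         + (sec_coeff lam x *\<^sub>R D zeta x h + D (sec_coeff lam) x h *\<^sub>R zeta x))) (at x)"
    by (intro has_derivative_add has_derivative_scaleR has_derivative_D_apply[OF smooth_tau open_U x]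
        has_derivative_D differentiable_sec_coords differentiable_sec_coeff zeta_has_derivative[OF x])
  then have "((\<lambda>z. Lb z (lam z)) has_derivative
      (\<lambda>h. D \<tau> x (D (sec_coords lam) x h) + D2 \<tau> x h (sec_coords lam x)
         + (sec_coeff lam x *\<^sub>R D zeta x h + D (sec_coeff lam) x h *\<^sub>R zeta x))) (at x)"
  proof (rule has_derivative_transform_within_open[OF _ open_U x])
    show "D \<tau> z (sec_coords lam z) + sec_coeff lam z *\<^sub>R zeta z = Lb z (lam z)" if z: "z \<in> U" for z
      by (subst section_decomp[where lam = lam, OF z lam_W[rule_format, OF z]])
         (simp add: linear_add[OF linear_Lbar[OF z]] linear_scale[OF linear_Lbar[OF z]]
            Lbar_tangent[OF z] Lbar_eta[OF z])
  qed
  from D_eqI[OF this] show ?thesis by (simp add: frozen_DL_def algebra_simps)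
qed

lemma phi_frozen:
  "phi f \<tau> \<eta> \<xi> x X lam =
     (let a = R_proj x (frozen_D x X (sec_coords lam x) (sec_coeff lam x));
          b = R_proj x (frozen_DL x X (sec_coords lam x) (sec_coeff lam x)
                - Lb x (frozen_D x X (sec_coords lam x) (sec_coeff lam x)))
      in (a + b, a - b))"
proof -
  note R = linear_R_proj[OF x] and L = linear_Lbar[OF x]
  have "R_proj x (D lam x X) = R_proj x (frozen_D x X (sec_coords lam x) (sec_coeff lam x))"
    unfolding D_section
    by (simp add: linear_add[OF R] linear_scale[OF R] R_proj_tangent[OF x] R_proj_eta[OF x])
  moreover have "covLbar f \<tau> \<eta> \<xi> x X lam = frozen_DL x X (sec_coords lam x) (sec_coeff lam x)
      - Lb x (frozen_D x X (sec_coords lam x) (sec_coeff lam x))"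
    unfolding covLbar_def Lbar_W_proj[OF x] D_Lbar_section D_section
    by (simp add: linear_add[OF L] linear_scale[OF L] Lbar_tangent[OF x] Lbar_eta[OF x])
  ultimately show ?thesis unfolding phi_def by simp
qed

end

lemma iip_phi:
  assumes x: "x \<in> U"
    and "smooth_on U lam" "\<forall>z\<in>U. lam z \<in> Wsp f \<eta> z"
    and "smooth_on U del" "\<forall>z\<in>U. del z \<in> Wsp f \<eta> z"
  shows "iip (phi f \<tau> \<eta> \<xi> x X lam) (phi f \<tau> \<eta> \<xi> x Y del)
       = 2 * (inner (frozen_D x X (sec_coords lam x) (sec_coeff lam x))
                    (frozen_DL x Y (sec_coords del x) (sec_coeff del x))
            + inner (frozen_DL x X (sec_coords lam x) (sec_coeff lam x))
                    (frozen_D x Y (sec_coords del x) (sec_coeff del x)))"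
  unfolding phi_frozen[OF assms(1-3)] phi_frozen[OF assms(1,4,5)] Let_def iip_sum_diff
    inner_R_proj_frozen[OF x] ..

lemma phi_flat:
  assumes "x \<in> U"
    and "smooth_on U lam" "\<forall>z\<in>U. lam z \<in> Wsp f \<eta> z"
    and "smooth_on U del" "\<forall>z\<in>U. del z \<in> Wsp f \<eta> z"
  shows "iip (phi f \<tau> \<eta> \<xi> x X lam) (phi f \<tau> \<eta> \<xi> x Y del)
       - iip (phi f \<tau> \<eta> \<xi> x X del) (phi f \<tau> \<eta> \<xi> x Y lam) = 0"
  unfolding iip_phi[OF assms] iip_phi[OF assms(1,4,5,2,3)] frozen_symmetric[OF assms(1)] by simp

end


theorem lemma18:
  fixes U :: "(real^'n) set"
    and f \<tau> :: "real^'n \<Rightarrow> real^'m"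
    and \<eta> \<xi> :: "real^'n \<Rightarrow> real^'m"
  assumes "open U"
    and "CARD('m) \<ge> CARD('n) + 2"
    and "immersion_on U f"
    and "infinitesimal_bending U f \<tau>"
    and "cond_star U f \<tau> \<eta> \<xi>"
    and "x \<in> U"
    and "smooth_on U lam" and "\<forall>z\<in>U. lam z \<in> Wsp f \<eta> z"
    and "smooth_on U del" and "\<forall>z\<in>U. del z \<in> Wsp f \<eta> z"
  shows "iip (phi f \<tau> \<eta> \<xi> x X lam) (phi f \<tau> \<eta> \<xi> x Y del)
       - iip (phi f \<tau> \<eta> \<xi> x X del) (phi f \<tau> \<eta> \<xi> x Y lam) = 0"
proof -
  interpret bending_cond_star U f \<tau> \<eta> \<xi> using assms(1,3-5) by unfold_locales
  show ?thesis by (rule phi_flat[OF assms(6-10)])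
qed

end
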